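(* Let $k$ be a field, $e \geq 1$, and $M$ a finite-dimensional $k[T]/T^e$-module. Let $\mu = (d_1, \dots, d_e)$ be a tuple of nonnegative integers, $\sigma$ a permutation of $\{1,\dots,e\}$ and $\mu' = (d_{\sigma(1)}, \dots, d_{\sigma(e)})$. Then there exists a PR datum of type $\mu$ for $M$ if and only if there exists a PR datum of type $\mu'$ for $M$.
   Context: A PR datum of type $(d_1,\dots,d_e)$ for $M$ is a filtration $0 = M_0 \subseteq M_1 \subseteq \dots \subseteq M_e = M$ by $k$-vector subspaces such that $T \cdot M_i \subseteq M_{i-1}$ and $\dim_k M_i/M_{i-1} = d_i$ for $1 \leq i \leq e$. *)

theory Defs
  imports Complex_Main "HOL-Combinatorics.Permutations"
begin

text \<open>The k[T]/T^e-module M is modelled as the whole carrier type 'v of a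
k-vector space (given by the scalar multiplication scale) together with
a k-linear endomorphism T (the action of T) such that T^e = 0.
A PR datum of type (d_1,...,d_e) is a chain of subspaces Mf 0, ..., Mf e.\<close>

definition PR_datum ::
  "('k::field \<Rightarrow> 'v::ab_group_add \<Rightarrow> 'v) \<Rightarrow> ('v \<Rightarrow> 'v) \<Rightarrow> nat \<Rightarrow> (nat \<Rightarrow> nat)
     \<Rightarrow> (nat \<Rightarrow> 'v set) \<Rightarrow> bool" where
  "PR_datum scale T e d Mf \<longleftrightarrow>
     Mf 0 = {0} \<and> Mf e = UNIV \<and>
     (\<forall>i\<le>e. module.subspace scale (Mf i)) \<and>
     (\<forall>i\<in>{1..e}. Mf (i - 1) \<subseteq> Mf i \<and> T ` (Mf i) \<subseteq> Mf (i - 1) \<and>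
        vector_space.dim scale (Mf i) = vector_space.dim scale (Mf (i - 1)) + d i)"

definition has_PR_datum ::
  "('k::field \<Rightarrow> 'v::ab_group_add \<Rightarrow> 'v) \<Rightarrow> ('v \<Rightarrow> 'v) \<Rightarrow> nat \<Rightarrow> (nat \<Rightarrow> nat) \<Rightarrow> bool" where
  "has_PR_datum scale T e d \<longleftrightarrow> (\<exists>Mf. PR_datum scale T e d Mf)"

end

theory Submission
  imports Defs
begin

text \<open>Everything reduces to exchanging two adjacent steps \<open>d\<^sub>i\<close>, \<open>d\<^sub>i\<^sub>+\<^sub>1\<close>. With
  \<open>A = M\<^sub>i\<^sub>-\<^sub>1\<close> and \<open>C = M\<^sub>i\<^sub>+\<^sub>1\<close>, the admissible middle terms \<open>M\<close>
  (\<open>A \<subseteq> M \<subseteq> C\<close>, \<open>T C \<subseteq> M\<close>, \<open>T M \<subseteq> A\<close>) are exactly the subspaces between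
  \<open>U = A + T C\<close> and \<open>K = C \<inter> T\<^sup>-\<^sup>1 A\<close>. Rank-nullity gives
  \<open>dim U + dim K = dim A + dim C\<close>, so the admissible dimensions are symmetric about
  \<open>(dim A + dim C) / 2\<close> and \<open>M\<close> can be replaced by a middle term of dimension
  \<open>dim A + dim C - dim M\<close>, which swaps \<open>d\<^sub>i\<close> and \<open>d\<^sub>i\<^sub>+\<^sub>1\<close>. Adjacent
  transpositions generate all permutations of \<open>{1..e}\<close>.\<close>

lemma (in vector_space) finite_dimensional_vector_space_if_finite_span:
  assumes "finite S" and "span S = UNIV"
  obtains Basis where "finite_dimensional_vector_space scale Basis"
proof -
  obtain B where B: "independent B" "UNIV \<subseteq> span B"
    using basis_exists[of UNIV] by blast
  have "finite B"
    using independent_span_bound[OF assms(1) B(1)] assms(2) by blast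
  then show thesis
    using B by (intro that[of B]) (unfold_locales, auto)
qed

context finite_dimensional_vector_space
begin

lemma rank_nullity_subspace:
  assumes lin: "Vector_Spaces.linear scale scale f" and S: "subspace S"
  shows "dim S = dim (S \<inter> {x. f x = 0}) + dim (f ` S)"
proof -
  interpret f: Vector_Spaces.linear scale scale f by (rule lin)
  obtain B0 where B0: "B0 \<subseteq> S \<inter> {x. f x = 0}" "independent B0"
      "S \<inter> {x. f x = 0} \<subseteq> span B0" "card B0 = dim (S \<inter> {x. f x = 0})"
    using basis_exists by blast
  obtain B where B: "B0 \<subseteq> B" "B \<subseteq> S" "independent B" "S \<subseteq> span B"
    using maximal_independent_subset_extend[of B0 S] B0 by blast
  define B1 where "B1 = B - B0"
  have "finite B" using B(3) finiteI_independent by blast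
  have B_split: "B = B0 \<union> B1" "B0 \<inter> B1 = {}" using B(1) by (auto simp: B1_def)
  have card_B: "card B = card B0 + card B1"
    using B_split \<open>finite B\<close> by (simp add: card_Un_disjoint)
  have span_B: "span B = S" using B S span_minimal span_subspace by blast
  have B1_indep: "independent B1" using B(3) independent_mono by (auto simp: B1_def)
  have span_B0_B1: "span B0 \<inter> span B1 \<subseteq> {0}"
  proof -
    have "dim {x + y |x y. x \<in> span B0 \<and> y \<in> span B1} + dim (span B0 \<inter> span B1)
        = dim (span B0) + dim (span B1)"
      by (rule dim_sums_Int[OF subspace_span subspace_span])
    then show ?thesis
      using card_B B_split(1) B0(2) B1_indep B(3)
      by (simp add: span_Un[symmetric] dim_eq_card_independent)
  qed
  have "span B1 \<subseteq> S" using span_B B_split span_mono by blast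
  then have inj: "inj_on f (span B1)"
    unfolding f.inj_on_iff_eq_0[OF subspace_span] using B0(3) span_B0_B1 by blast
  have kernel: "span B0 \<subseteq> {x. f x = 0}"
    using B0(1) span_minimal f.subspace_kernel by blast
  have "f ` S = f ` span B1"
  proof
    show "f ` span B1 \<subseteq> f ` S" using \<open>span B1 \<subseteq> S\<close> by blast
    show "f ` S \<subseteq> f ` span B1"
    proof
      fix z assume "z \<in> f ` S"
      then obtain a b where ab: "a \<in> span B0" "b \<in> span B1" "z = f (a + b)"
        using span_B B_split span_Un by auto
      then have "z = f b" using kernel f.add by auto
      then show "z \<in> f ` span B1" using ab by blast
    qed
  qed
  then have "dim (f ` S) = card (f ` B1)"
    using dim_eq_card_independent f.independent_injective_image[OF B1_indep inj]
    by (simp add: f.span_image[symmetric])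
  also have "\<dots> = card B1" using inj span_superset by (metis card_image inj_on_subset)
  finally show ?thesis using B0(4) card_B basis_card_eq_dim[OF B(2,4,3)] by simp
qed

lemma exists_subspace_dim_between:
  assumes "subspace U" and "subspace W" and "U \<subseteq> W" and "dim U \<le> n" and "n \<le> dim W"
  obtains V where "subspace V" "U \<subseteq> V" "V \<subseteq> W" "dim V = n"
proof -
  obtain BU where BU: "BU \<subseteq> U" "independent BU" "U \<subseteq> span BU" "card BU = dim U"
    using basis_exists by blast
  obtain BW where BW: "BU \<subseteq> BW" "BW \<subseteq> W" "independent BW" "W \<subseteq> span BW"
    using maximal_independent_subset_extend[of BU W] BU \<open>U \<subseteq> W\<close> by blast
  have "finite BW" using BW(3) finiteI_independent by blast
  have "card BW = dim W" using basis_card_eq_dim BW by blast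
  then have "n - dim U \<le> card (BW - BU)"
    using BU(4) BW(1) \<open>finite BW\<close> \<open>n \<le> dim W\<close> by (simp add: card_Diff_subset finite_subset)
  then obtain X where X: "X \<subseteq> BW - BU" "card X = n - dim U"
    by (rule obtain_subset_with_card_n)
  have "BU \<union> X \<subseteq> BW" using BW(1) X(1) by blast
  then have indep: "independent (BU \<union> X)" using BW(3) independent_mono by blast
  have "card (BU \<union> X) = n"
    using X BU(4) \<open>dim U \<le> n\<close> \<open>finite BW\<close> BW(1)
    by (subst card_Un_disjoint) (auto intro: finite_subset)
  show thesis
  proof (rule that[of "span (BU \<union> X)"])
    show "U \<subseteq> span (BU \<union> X)" using BU(3) span_mono by blast
    show "span (BU \<union> X) \<subseteq> W"
      using \<open>BU \<union> X \<subseteq> BW\<close> BW(2) \<open>subspace W\<close> span_minimal by blast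
    show "dim (span (BU \<union> X)) = n"
      using dim_span_eq_card_independent[OF indep] \<open>card (BU \<union> X) = n\<close> by simp
  qed (rule subspace_span)
qed

lemma dim_sum_image_add_dim_preimage:
  assumes lin: "Vector_Spaces.linear scale scale T" and "subspace A" and "subspace C"
  shows "dim {x + y |x y. x \<in> A \<and> y \<in> T ` C} + dim (C \<inter> T -` A) = dim A + dim C"
proof -
  interpret T: Vector_Spaces.linear scale scale T by (rule lin)
  have "subspace (T ` C)" using T.subspace_image \<open>subspace C\<close> by blast
  have "subspace (C \<inter> T -` A)"
    using \<open>subspace A\<close> \<open>subspace C\<close> T.subspace_linear_preimage subspace_inter
    by (simp add: vimage_def)
  have "C \<inter> T -` A \<inter> {x. T x = 0} = C \<inter> {x. T x = 0}"
    using subspace_0[OF \<open>subspace A\<close>] by auto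
  moreover have "T ` (C \<inter> T -` A) = A \<inter> T ` C" by auto
  ultimately have "dim (C \<inter> T -` A) = dim (C \<inter> {x. T x = 0}) + dim (A \<inter> T ` C)"
    using rank_nullity_subspace[OF lin \<open>subspace (C \<inter> T -` A)\<close>] by simp
  moreover have "dim C = dim (C \<inter> {x. T x = 0}) + dim (T ` C)"
    by (rule rank_nullity_subspace[OF lin \<open>subspace C\<close>])
  moreover have "dim {x + y |x y. x \<in> A \<and> y \<in> T ` C} + dim (A \<inter> T ` C) = dim A + dim (T ` C)"
    by (rule dim_sums_Int[OF \<open>subspace A\<close> \<open>subspace (T ` C)\<close>])
  ultimately show ?thesis by linarith
qed

lemma exchange_middle_subspace:
  assumes lin: "Vector_Spaces.linear scale scale T"
    and "subspace A" "subspace M" "subspace C" "A \<subseteq> M" "M \<subseteq> C" "T ` C \<subseteq> M" "T ` M \<subseteq> A"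
  obtains M' where "subspace M'" "A \<subseteq> M'" "M' \<subseteq> C" "T ` C \<subseteq> M'" "T ` M' \<subseteq> A"
    "dim M' + dim M = dim A + dim C"
proof -
  interpret T: Vector_Spaces.linear scale scale T by (rule lin)
  define U where "U = {x + y |x y. x \<in> A \<and> y \<in> T ` C}"
  define K where "K = C \<inter> T -` A"
  have "subspace U"
    unfolding U_def using subspace_sums \<open>subspace A\<close> \<open>subspace C\<close> T.subspace_image by blast
  have "subspace K"
    unfolding K_def using \<open>subspace A\<close> \<open>subspace C\<close> T.subspace_linear_preimage subspace_inter
    by (simp add: vimage_def)
  have "0 \<in> A" "0 \<in> T ` C"
    using subspace_0[OF \<open>subspace A\<close>] subspace_0[OF \<open>subspace C\<close>] T.zero by force+
  then have "A \<subseteq> U" "T ` C \<subseteq> U"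
    unfolding U_def by (blast intro: add.right_neutral[symmetric] add.left_neutral[symmetric])+
  have "U \<subseteq> M"
    unfolding U_def using \<open>A \<subseteq> M\<close> \<open>T ` C \<subseteq> M\<close> subspace_add \<open>subspace M\<close> by blast
  have "M \<subseteq> K" unfolding K_def using \<open>M \<subseteq> C\<close> \<open>T ` M \<subseteq> A\<close> by blast
  have "dim U + dim K = dim A + dim C"
    unfolding U_def K_def by (rule dim_sum_image_add_dim_preimage[OF lin \<open>subspace A\<close> \<open>subspace C\<close>])
  moreover have "dim U \<le> dim M" "dim M \<le> dim K" "dim M \<le> dim C"
    using \<open>U \<subseteq> M\<close> \<open>M \<subseteq> K\<close> \<open>M \<subseteq> C\<close> dim_subset by auto
  ultimately have "dim U \<le> dim A + dim C - dim M" "dim A + dim C - dim M \<le> dim K"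
    by linarith+
  then obtain M' where M': "subspace M'" "U \<subseteq> M'" "M' \<subseteq> K" "dim M' = dim A + dim C - dim M"
    using exists_subspace_dim_between[OF \<open>subspace U\<close> \<open>subspace K\<close> order_trans[OF \<open>U \<subseteq> M\<close> \<open>M \<subseteq> K\<close>]]
    by blast
  show thesis
    using M' \<open>A \<subseteq> U\<close> \<open>T ` C \<subseteq> U\<close> \<open>dim M \<le> dim C\<close>
    by (intro that[of M']) (auto simp: K_def)
qed

lemma PR_datum_swap_adjacent:
  assumes "PR_datum scale T e d Mf" and "1 \<le> i" and "i < e"
    and M': "subspace M'" "Mf (i - 1) \<subseteq> M'" "M' \<subseteq> Mf (Suc i)"
      "T ` Mf (Suc i) \<subseteq> M'" "T ` M' \<subseteq> Mf (i - 1)"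
      "dim M' + dim (Mf i) = dim (Mf (i - 1)) + dim (Mf (Suc i))"
  shows "PR_datum scale T e (d \<circ> transpose i (Suc i)) (Mf(i := M'))"
proof -
  from \<open>PR_datum scale T e d Mf\<close>
  have Mf: "Mf 0 = {0}" "Mf e = UNIV" "\<And>j. j \<le> e \<Longrightarrow> subspace (Mf j)"
    and step: "\<And>j. j \<in> {1..e} \<Longrightarrow>
      Mf (j - 1) \<subseteq> Mf j \<and> T ` Mf j \<subseteq> Mf (j - 1) \<and> dim (Mf j) = dim (Mf (j - 1)) + d j"
    by (auto simp: PR_datum_def)
  have "dim (Mf i) = dim (Mf (i - 1)) + d i" "dim (Mf (Suc i)) = dim (Mf i) + d (Suc i)"
    using step[of i] step[of "Suc i"] \<open>1 \<le> i\<close> \<open>i < e\<close> by auto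
  define Mf' where "Mf' = Mf(i := M')"
  have Mf'_step: "Mf' (j - 1) \<subseteq> Mf' j \<and> T ` Mf' j \<subseteq> Mf' (j - 1) \<and>
      dim (Mf' j) = dim (Mf' (j - 1)) + d (transpose i (Suc i) j)" if "j \<in> {1..e}" for j
  proof -
    consider "j = i" | "j = Suc i" | "j \<noteq> i" "j - 1 \<noteq> i" by linarith
    then show ?thesis
    proof cases
      case 1
      have "Mf' (j - 1) = Mf (i - 1)" "Mf' j = M'" using 1 \<open>1 \<le> i\<close> by (auto simp: Mf'_def)
      moreover have "dim M' = dim (Mf (i - 1)) + d (Suc i)"
        using M'(6) \<open>dim (Mf i) = _\<close> \<open>dim (Mf (Suc i)) = _\<close> by linarith
      ultimately show ?thesis using 1 M'(2,5) by simp
    next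
      case 2
      have "Mf' (j - 1) = M'" "Mf' j = Mf (Suc i)" using 2 by (simp_all add: Mf'_def)
      moreover have "dim (Mf (Suc i)) = dim M' + d i"
        using M'(6) \<open>dim (Mf i) = _\<close> \<open>dim (Mf (Suc i)) = _\<close> by linarith
      ultimately show ?thesis using 2 M'(3,4) by simp
    next
      case 3
      then have "Mf' (j - 1) = Mf (j - 1)" "Mf' j = Mf j" by (simp_all add: Mf'_def)
      then show ?thesis using 3 step[OF that] by simp
    qed
  qed
  show ?thesis
    unfolding PR_datum_def Mf'_def[symmetric]
  proof (intro conjI)
    show "Mf' 0 = {0}" using Mf(1) \<open>1 \<le> i\<close> by (simp add: Mf'_def)
    show "Mf' e = UNIV" using Mf(2) \<open>i < e\<close> by (simp add: Mf'_def)
    show "\<forall>j\<le>e. subspace (Mf' j)" using Mf(3) M'(1) by (simp add: Mf'_def)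
  qed (use Mf'_step in simp)
qed

lemma has_PR_datum_swap_adjacent:
  assumes lin: "Vector_Spaces.linear scale scale T"
    and "has_PR_datum scale T e d" and "1 \<le> i" and "i < e"
  shows "has_PR_datum scale T e (d \<circ> transpose i (Suc i))"
proof -
  obtain Mf where Mf: "PR_datum scale T e d Mf"
    using \<open>has_PR_datum scale T e d\<close> by (auto simp: has_PR_datum_def)
  then have step: "Mf (j - 1) \<subseteq> Mf j \<and> T ` Mf j \<subseteq> Mf (j - 1)" if "j \<in> {1..e}" for j
    using that by (simp add: PR_datum_def)
  have "Mf (i - 1) \<subseteq> Mf i" "T ` Mf i \<subseteq> Mf (i - 1)"
    "Mf i \<subseteq> Mf (Suc i)" "T ` Mf (Suc i) \<subseteq> Mf i"
    "subspace (Mf (i - 1))" "subspace (Mf i)" "subspace (Mf (Suc i))"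
    using step[of i] step[of "Suc i"] Mf \<open>1 \<le> i\<close> \<open>i < e\<close> by (auto simp: PR_datum_def)
  then obtain M' where "subspace M'" "Mf (i - 1) \<subseteq> M'" "M' \<subseteq> Mf (Suc i)"
      "T ` Mf (Suc i) \<subseteq> M'" "T ` M' \<subseteq> Mf (i - 1)"
      "dim M' + dim (Mf i) = dim (Mf (i - 1)) + dim (Mf (Suc i))"
    using exchange_middle_subspace[OF lin] by metis
  then have "PR_datum scale T e (d \<circ> transpose i (Suc i)) (Mf(i := M'))"
    using PR_datum_swap_adjacent[OF Mf \<open>1 \<le> i\<close> \<open>i < e\<close>] by blast
  then show ?thesis by (auto simp: has_PR_datum_def)
qed

end

lemma comp_transpose_closed_if_adjacent:
  assumes adjacent: "\<And>d i. 1 \<le> i \<Longrightarrow> i < n \<Longrightarrow> Q d \<Longrightarrow> Q (d \<circ> transpose i (Suc i))"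
    and "a \<in> {1..n}" and "b \<in> {1..n}" and "Q d"
  shows "Q (d \<circ> transpose a b)"
proof -
  have closed_le: "\<forall>d. Q d \<longrightarrow> Q (d \<circ> transpose a b)" if "1 \<le> a" "a \<le> b" "b \<le> n" for a b
    using that(2,3)
  proof (induction b rule: dec_induct)
    case base
    show ?case by simp
  next
    case (step b)
    have "transpose a (Suc b) = transpose a b \<circ> transpose b (Suc b) \<circ> transpose a b"
      using step.hyps(1) by (simp add: transpose_comp_triple)
    show ?case
    proof (intro allI impI)
      fix d assume "Q d"
      have IH: "\<forall>d. Q d \<longrightarrow> Q (d \<circ> transpose a b)"
        using step.IH step.prems Suc_leD by blast
      have "1 \<le> b" "b < n" using step.hyps(1) step.prems \<open>1 \<le> a\<close> by auto
      then have "Q (d \<circ> transpose a b \<circ> transpose b (Suc b) \<circ> transpose a b)"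
        using IH adjacent[of b] \<open>Q d\<close> by blast
      then show "Q (d \<circ> transpose a (Suc b))"
        unfolding \<open>transpose a (Suc b) = _\<close> by (simp only: comp_assoc)
    qed
  qed
  show ?thesis
  proof (cases "a \<le> b")
    case True
    then show ?thesis using closed_le assms(2-4) by auto
  next
    case False
    then have "Q (d \<circ> transpose b a)" using closed_le[of b a] assms(2-4) by auto
    then show ?thesis by (simp only: transpose_commute)
  qed
qed

lemma comp_permutes_iff_if_adjacent:
  assumes adjacent: "\<And>d i. 1 \<le> i \<Longrightarrow> i < n \<Longrightarrow> Q d \<Longrightarrow> Q (d \<circ> transpose i (Suc i))"
    and "\<sigma> permutes {1..n}"
  shows "Q (d \<circ> \<sigma>) \<longleftrightarrow> Q d"
proof -
  have closed: "\<forall>d. Q d \<longrightarrow> Q (d \<circ> p)" if "p permutes {1..n}" for p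
    using that finite_atLeastAtMost
  proof (induction rule: permutes_induct)
    case id
    show ?case by simp
  next
    case (swap a b p)
    show ?case
    proof (intro allI impI)
      fix d assume "Q d"
      then have "Q (d \<circ> transpose a b \<circ> p)"
        using comp_transpose_closed_if_adjacent[where n = n and Q = Q, OF adjacent] swap.hyps swap.IH
        by blast
      then show "Q (d \<circ> (transpose a b \<circ> p))" by (simp only: comp_assoc)
    qed
  qed
  have "d \<circ> \<sigma> \<circ> inv \<sigma> = d"
    using permutes_inverses(1)[OF \<open>\<sigma> permutes {1..n}\<close>] by (simp add: fun_eq_iff)
  then show ?thesis
    using closed[OF \<open>\<sigma> permutes {1..n}\<close>] closed[OF permutes_inv[OF \<open>\<sigma> permutes {1..n}\<close>]]
    by metis
qed

theorem mainTheorem4: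
  fixes scale :: "'k::field \<Rightarrow> 'v::ab_group_add \<Rightarrow> 'v"
    and T :: "'v \<Rightarrow> 'v" and e :: nat and d :: "nat \<Rightarrow> nat" and \<sigma> :: "nat \<Rightarrow> nat"
  assumes "vector_space scale"
    and "\<exists>B. finite B \<and> module.span scale B = UNIV"
    and "Vector_Spaces.linear scale scale T"
    and "(T ^^ e) = (\<lambda>_. 0)"
    and "e \<ge> 1"
    and "\<sigma> permutes {1..e}"
  shows "has_PR_datum scale T e d \<longleftrightarrow> has_PR_datum scale T e (\<lambda>i. d (\<sigma> i))"
proof -
  interpret vector_space scale by fact
  obtain Basis where "finite_dimensional_vector_space scale Basis"
    using finite_dimensional_vector_space_if_finite_span assms(2) by blast
  then interpret finite_dimensional_vector_space scale Basis .
  have "has_PR_datum scale T e (d \<circ> \<sigma>) \<longleftrightarrow> has_PR_datum scale T e d"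
    using comp_permutes_iff_if_adjacent[where Q = "has_PR_datum scale T e"]
      has_PR_datum_swap_adjacent[OF assms(3)] assms(6) by blast
  then show ?thesis by (simp add: comp_def)
qed

end
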